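(* Let $f$ satisfy conditions (1) and (2a), let $a,p>0$ and $x,y\in\mathbb{R}$. In the expression \[ a\,e^{-p(x^2+y^2)}\int_0^\infty\!\!\int_0^{2\pi} f(r')\,e^{-pr'^2}\sum_{n=0}^\infty(2p)^n\sum_{i=0}^n\frac{x^{n-i}y^i}{(n-i)!\,i!}\,r'^n\cos^{n-i}\varphi'\sin^i\varphi'\;r'\,d\varphi'\,dr' \] the order of summation and integration may be reversed, for arbitrary values of $p$ and $r=\sqrt{x^2+y^2}$.
   Context: $f:[0,\infty)\to\mathbb{R}$; $c_n=2\pi\int_0^\infty f(r)\,r^{n+1}dr$. Condition (1): there is a constant $F$ with $0\le f(r)\le F$ for all $r\ge0$, $c_0$ exists and $c_0>0$. Condition (2a): $c_{2n}$ exists for all $n\in\mathbb{N}_0$ and $c_n^{1/n}=o(n)$ as $n\to\infty$. *)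

theory Defs
  imports "HOL-Analysis.Analysis" "HOL-Library.Landau_Symbols"
begin

definition moment :: "(real \<Rightarrow> real) \<Rightarrow> nat \<Rightarrow> real" where
  "moment f n = 2 * pi * (LINT r:{0..}|lborel. f r * r ^ (n + 1))"

definition cond1 :: "(real \<Rightarrow> real) \<Rightarrow> bool" where
  "cond1 f \<longleftrightarrow> (\<exists>F. \<forall>r\<ge>0. 0 \<le> f r \<and> f r \<le> F)
     \<and> set_integrable lborel {0..} (\<lambda>r. f r * r) \<and> moment f 0 > 0"

definition cond2a :: "(real \<Rightarrow> real) \<Rightarrow> bool" where
  "cond2a f \<longleftrightarrow> (\<forall>n. set_integrable lborel {0..} (\<lambda>r. f r * r ^ (2 * n + 1)))
     \<and> (\<lambda>n. moment f n powr (1 / real n)) \<in> o(\<lambda>n. real n)"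

text \<open>The n-th term of the series in the integrand (including the area element r').\<close>
definition series_term :: "(real \<Rightarrow> real) \<Rightarrow> real \<Rightarrow> real \<Rightarrow> real \<Rightarrow> nat \<Rightarrow> real \<Rightarrow> real \<Rightarrow> real" where
  "series_term f p x y n r \<phi> =
     f r * exp (- p * r\<^sup>2) * ((2 * p) ^ n *
       (\<Sum>i\<le>n. x ^ (n - i) * y ^ i / (fact (n - i) * fact i) * r ^ n * cos \<phi> ^ (n - i) * sin \<phi> ^ i))
     * r"

definition iter_int :: "(real \<Rightarrow> real \<Rightarrow> real) \<Rightarrow> real" where
  "iter_int g = (LINT r:{0..}|lborel. (LINT \<phi>:{0..2*pi}|lborel. g r \<phi>))"

end

theory Submission
  imports Defs "HOL-Probability.Sinc_Integral"
begin

(* By the binomial theorem the n-th term is f(r') e^(-p r'^2) r' t^n / n! with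
   t = 2 p r' (x cos phi' + y sin phi'), and |t| <= 2 p (|x| + |y|) r'.  Hence all partial sums
   are bounded in absolute value by F e^(-p r'^2) r' e^(2 p (|x| + |y|) r'), which is at most a
   constant times e^(-r'), an integrable function on the half-strip [0, oo) x [0, 2 pi].
   Dominated convergence applied to the partial sums then justifies integrating termwise. *)

lemma (in pair_sigma_finite) integrable_product_mult:
  fixes f :: "'a \<Rightarrow> real" and g :: "'b \<Rightarrow> real"
  assumes f: "integrable M1 f" and g: "integrable M2 g"
  shows "integrable (M1 \<Otimes>\<^sub>M M2) (\<lambda>z. f (fst z) * g (snd z))"
proof (rule Fubini_integrable)
  show "(\<lambda>z. f (fst z) * g (snd z)) \<in> borel_measurable (M1 \<Otimes>\<^sub>M M2)"
    using f g by measurable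
  have "(\<integral>y. norm (f x * g y) \<partial>M2) = \<bar>f x\<bar> * (\<integral>y. \<bar>g y\<bar> \<partial>M2)" for x
    by (simp add: abs_mult)
  then show "integrable M1 (\<lambda>x. \<integral>y. norm (f (fst (x, y)) * g (snd (x, y))) \<partial>M2)"
    using f by simp
  show "AE x in M1. integrable M2 (\<lambda>y. f (fst (x, y)) * g (snd (x, y)))"
    using g by simp
qed

lemma sums_integral_dominated:
  fixes h :: "nat \<Rightarrow> 'a \<Rightarrow> 'b::{banach, second_countable_topology}"
  assumes h_meas[measurable]: "\<And>n. h n \<in> borel_measurable M"
    and w: "integrable M w"
    and bound: "\<And>N x. x \<in> space M \<Longrightarrow> norm (\<Sum>n<N. h n x) \<le> w x"
    and sums: "\<And>x. x \<in> space M \<Longrightarrow> (\<lambda>n. h n x) sums s x"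
  shows "integrable M (h n)"
    and "integrable M s"
    and "(\<lambda>n. integral\<^sup>L M (h n)) sums integral\<^sup>L M s"
proof -
  have lim: "x \<in> space M \<Longrightarrow> (\<lambda>N. \<Sum>n<N. h n x) \<longlonglongrightarrow> s x" for x
    using sums by (simp add: sums_def)
  have s_meas: "s \<in> borel_measurable M"
    by (rule borel_measurable_LIMSEQ_metric[OF _ lim]) simp
  have partial_meas: "(\<lambda>x. \<Sum>n<N. h n x) \<in> borel_measurable M" for N
    by measurable
  note dc = integrable_dominated_convergence integrable_dominated_convergence2
    integral_dominated_convergence
  note dc = dc[where s="\<lambda>N x. \<Sum>n<N. h n x", OF s_meas partial_meas w AE_I2[OF lim] AE_I2[OF bound]]
  have partial: "integrable M (\<lambda>x. \<Sum>n<N. h n x)" for N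
    using dc(2) by simp
  have h_int: "integrable M (h k)" for k
  proof -
    have "integrable M (\<lambda>x. (\<Sum>i<Suc k. h i x) - (\<Sum>i<k. h i x))"
      using partial[of "Suc k"] partial[of k] by (rule Bochner_Integration.integrable_diff)
    then show ?thesis
      by simp
  qed
  then show "integrable M (h n)" .
  show "integrable M s"
    using dc(1) .
  show "(\<lambda>n. integral\<^sup>L M (h n)) sums integral\<^sup>L M s"
    using dc(3) by (simp add: sums_def integral_sum h_int)
qed

lemma gaussian_times_exp_le:
  fixes p r c :: real
  assumes "p > 0"
  shows "exp (- p * r\<^sup>2) * r * exp (c * r) \<le> exp ((c + 2)\<^sup>2 / (4 * p)) * exp (- r)"
proof -
  have "r \<le> exp r"
    using exp_ge_add_one_self[of r] by linarith
  then have "exp (- p * r\<^sup>2) * r * exp (c * r) \<le> exp (- p * r\<^sup>2) * exp r * exp (c * r)"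
    by simp
  also have "\<dots> = exp (- p * r\<^sup>2 + (c + 1) * r)"
    by (simp add: exp_add[symmetric] algebra_simps)
  also have "\<dots> \<le> exp ((c + 2)\<^sup>2 / (4 * p) - r)"
  proof -
    have "0 \<le> p * (r - (c + 2) / (2 * p))\<^sup>2"
      using assms by simp
    also have "\<dots> = p * r\<^sup>2 - (c + 2) * r + (c + 2)\<^sup>2 / (4 * p)"
      using assms by (simp add: power2_eq_square field_simps)
    finally show ?thesis
      by (simp add: algebra_simps)
  qed
  also have "\<dots> = exp ((c + 2)\<^sup>2 / (4 * p)) * exp (- r)"
    by (simp add: exp_diff exp_minus field_simps)
  finally show ?thesis .
qed

lemma series_term_eq:
  "series_term f p x y n r \<phi> =
     f r * exp (- p * r\<^sup>2) * r * ((2 * p * r * (x * cos \<phi> + y * sin \<phi>)) ^ n / fact n)"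
proof -
  have binomial: "(x * cos \<phi> + y * sin \<phi>) ^ n
      = (\<Sum>i\<le>n. of_nat (n choose i) * (y * sin \<phi>) ^ i * (x * cos \<phi>) ^ (n - i))"
    using binomial_ring[of "y * sin \<phi>" "x * cos \<phi>" n] by (simp add: add.commute)
  have summand: "(2 * p * r) ^ n * (of_nat (n choose i) * (y * sin \<phi>) ^ i * (x * cos \<phi>) ^ (n - i)) / fact n
      = (2 * p) ^ n * (x ^ (n - i) * y ^ i / (fact (n - i) * fact i) * r ^ n * cos \<phi> ^ (n - i) * sin \<phi> ^ i)"
    if "i \<le> n" for i
    using binomial_fact[OF that, where 'a=real] by (simp add: power_mult_distrib field_simps)
  have "(2 * p * r * (x * cos \<phi> + y * sin \<phi>)) ^ n / fact n
      = (\<Sum>i\<le>n. (2 * p * r) ^ n * (of_nat (n choose i) * (y * sin \<phi>) ^ i * (x * cos \<phi>) ^ (n - i)) / fact n)"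
    unfolding power_mult_distrib[of "2 * p * r"] binomial
    by (simp add: sum_distrib_left sum_divide_distrib)
  also have "\<dots> = (2 * p) ^ n *
      (\<Sum>i\<le>n. x ^ (n - i) * y ^ i / (fact (n - i) * fact i) * r ^ n * cos \<phi> ^ (n - i) * sin \<phi> ^ i)"
    by (simp add: summand sum_distrib_left)
  finally show ?thesis
    unfolding series_term_def by simp
qed

lemma series_term_sums:
  "(\<lambda>n. series_term f p x y n r \<phi>) sums
     (f r * exp (- p * r\<^sup>2) * r * exp (2 * p * r * (x * cos \<phi> + y * sin \<phi>)))"
  unfolding series_term_eq
  using sums_mult[OF exp_converges[of "2 * p * r * (x * cos \<phi> + y * sin \<phi>)"],
      of "f r * exp (- p * r\<^sup>2) * r"]
  by (simp add: scaleR_conv_of_real divide_inverse mult_ac)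

lemma series_term_abs_sum_le:
  assumes "p > 0" "r \<ge> 0" "0 \<le> f r" "f r \<le> F" "finite I"
  shows "(\<Sum>n\<in>I. \<bar>series_term f p x y n r \<phi>\<bar>)
    \<le> F * exp ((2 * p * (\<bar>x\<bar> + \<bar>y\<bar>) + 2)\<^sup>2 / (4 * p)) * exp (- r)"
proof -
  define t where "t = 2 * p * r * (x * cos \<phi> + y * sin \<phi>)"
  define c where "c = 2 * p * (\<bar>x\<bar> + \<bar>y\<bar>)"
  have "\<bar>x * cos \<phi>\<bar> \<le> \<bar>x\<bar>" "\<bar>y * sin \<phi>\<bar> \<le> \<bar>y\<bar>"
    by (simp_all add: abs_mult mult_left_le)
  then have "\<bar>x * cos \<phi> + y * sin \<phi>\<bar> \<le> \<bar>x\<bar> + \<bar>y\<bar>"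
    by linarith
  then have "2 * p * r * \<bar>x * cos \<phi> + y * sin \<phi>\<bar> \<le> 2 * p * r * (\<bar>x\<bar> + \<bar>y\<bar>)"
    using assms by (intro mult_left_mono) auto
  moreover have "\<bar>t\<bar> = 2 * p * r * \<bar>x * cos \<phi> + y * sin \<phi>\<bar>"
    using assms unfolding t_def by (simp add: abs_mult)
  ultimately have t_le: "\<bar>t\<bar> \<le> c * r"
    by (simp add: c_def mult_ac)
  have "(\<Sum>n\<in>I. \<bar>series_term f p x y n r \<phi>\<bar>) = f r * exp (- p * r\<^sup>2) * r * (\<Sum>n\<in>I. \<bar>t\<bar> ^ n / fact n)"
    using assms unfolding series_term_eq t_def
    by (simp add: abs_mult power_abs sum_distrib_left)
  also have "\<dots> \<le> f r * exp (- p * r\<^sup>2) * r * exp \<bar>t\<bar>"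
  proof -
    have exp_sums: "(\<lambda>n. \<bar>t\<bar> ^ n / fact n) sums exp \<bar>t\<bar>"
      using exp_converges[of "\<bar>t\<bar>"] by (simp add: scaleR_conv_of_real divide_inverse mult.commute)
    have "(\<Sum>n\<in>I. \<bar>t\<bar> ^ n / fact n) \<le> exp \<bar>t\<bar>"
      using sum_le_suminf[OF sums_summable[OF exp_sums] \<open>finite I\<close>] sums_unique[OF exp_sums]
      by simp
    then show ?thesis
      using assms by (intro mult_left_mono) auto
  qed
  also have "\<dots> \<le> F * (exp (- p * r\<^sup>2) * r * exp (c * r))"
    using assms t_le by (simp add: mult.assoc mult_mono)
  also have "\<dots> \<le> F * exp ((c + 2)\<^sup>2 / (4 * p)) * exp (- r)"
    using gaussian_times_exp_le[OF \<open>p > 0\<close>, of r c] assms by (simp add: mult.assoc mult_left_mono)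
  finally show ?thesis
    unfolding c_def .
qed

lemma integrable_exp_neg_strip:
  fixes a b :: real
  shows "set_integrable (lborel \<Otimes>\<^sub>M lborel) ({0..} \<times> {a..b}) (\<lambda>(r, \<phi>). exp (- r) :: real)"
proof -
  have "integrable lborel (\<lambda>r. indicator {0..} r * exp (- r) :: real)"
    using integrable.intros[OF has_bochner_integral_I0i_power_exp_m'[of 0]] by (simp add: mult.commute)
  moreover have "integrable lborel (indicator {a..b} :: real \<Rightarrow> real)"
    by (intro integrable_real_indicator) (auto simp: emeasure_lborel_Icc_eq)
  ultimately have "integrable (lborel \<Otimes>\<^sub>M lborel)
      (\<lambda>z. indicator {0..} (fst z) * exp (- fst z) * indicator {a..b} (snd z) :: real)"
    by (rule lborel_pair.integrable_product_mult)
  then show ?thesis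
    unfolding set_integrable_def by (simp add: indicator_times case_prod_beta mult_ac)
qed

lemma series_term_strip_measurable:
  assumes "set_integrable lborel {0..} (\<lambda>r. f r * r)" and [measurable]: "B \<in> sets borel"
  shows "(\<lambda>z. indicator ({0..} \<times> B) z *\<^sub>R (\<lambda>(r, \<phi>). series_term f p x y n r \<phi>) z)
    \<in> borel_measurable (lborel \<Otimes>\<^sub>M lborel)"
proof -
  define g where "g r = indicator {0..} r * (f r * r)" for r :: real
  have [measurable]: "g \<in> borel_measurable borel"
    using borel_measurable_integrable[OF assms(1)[unfolded set_integrable_def]]
    unfolding g_def by simp
  have "(\<lambda>z. indicator ({0..} \<times> B) z *\<^sub>R (\<lambda>(r, \<phi>). series_term f p x y n r \<phi>) z)
     = (\<lambda>z. g (fst z) * indicator B (snd z) * exp (- p * (fst z)\<^sup>2)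
          * ((2 * p * fst z * (x * cos (snd z) + y * sin (snd z))) ^ n / fact n))"
    by (auto simp: fun_eq_iff g_def series_term_eq indicator_times split: split_indicator)
  also have "\<dots> \<in> borel_measurable (lborel \<Otimes>\<^sub>M lborel)"
    by measurable
  finally show ?thesis .
qed

lemma series_term_integrate_termwise:
  fixes f :: "real \<Rightarrow> real"
  defines "D \<equiv> {0..} \<times> {0..2*pi} :: (real \<times> real) set"
  assumes "cond1 f" and "p > 0"
  shows "set_integrable (lborel \<Otimes>\<^sub>M lborel) D (\<lambda>(r, \<phi>). series_term f p x y n r \<phi>)"
    and "set_integrable (lborel \<Otimes>\<^sub>M lborel) D (\<lambda>(r, \<phi>). \<Sum>n. series_term f p x y n r \<phi>)"
    and "(\<lambda>n. set_lebesgue_integral (lborel \<Otimes>\<^sub>M lborel) D (\<lambda>(r, \<phi>). series_term f p x y n r \<phi>))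
      sums set_lebesgue_integral (lborel \<Otimes>\<^sub>M lborel) D (\<lambda>(r, \<phi>). \<Sum>n. series_term f p x y n r \<phi>)"
proof -
  from \<open>cond1 f\<close> obtain F where f_nonneg: "\<And>r. r \<ge> 0 \<Longrightarrow> 0 \<le> f r"
    and f_le: "\<And>r. r \<ge> 0 \<Longrightarrow> f r \<le> F" and f_int: "set_integrable lborel {0..} (\<lambda>r. f r * r)"
    unfolding cond1_def by blast
  define C where "C = F * exp ((2 * p * (\<bar>x\<bar> + \<bar>y\<bar>) + 2)\<^sup>2 / (4 * p))"
  define h where "h n z = indicator D z *\<^sub>R (\<lambda>(r, \<phi>). series_term f p x y n r \<phi>) z" for n z
  define s where "s z = indicator D z *\<^sub>R (\<lambda>(r, \<phi>). \<Sum>n. series_term f p x y n r \<phi>) z" for z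
  define w where "w z = C * (indicator D z *\<^sub>R (\<lambda>(r, \<phi>). exp (- r)) z)" for z
  have h_meas: "h n \<in> borel_measurable (lborel \<Otimes>\<^sub>M lborel)" for n
    unfolding h_def D_def using series_term_strip_measurable[OF f_int] by simp
  have w_int: "integrable (lborel \<Otimes>\<^sub>M lborel) w"
    using integrable_exp_neg_strip[of 0 "2*pi"] unfolding w_def D_def set_integrable_def
    by (rule integrable_mult_right)
  have bound: "norm (\<Sum>n<N. h n z) \<le> w z" for N z
  proof (cases "z \<in> D")
    case True
    then have r: "fst z \<ge> 0"
      by (auto simp: D_def)
    have "\<bar>\<Sum>n<N. series_term f p x y n (fst z) (snd z)\<bar> \<le> C * exp (- fst z)"
      using sum_abs[of _ "{..<N}"]
        series_term_abs_sum_le[where f=f and r="fst z" and I="{..<N}",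
          OF \<open>p > 0\<close> r f_nonneg[OF r] f_le[OF r] finite_lessThan]
      unfolding C_def by (rule order_trans)
    with True show ?thesis
      by (simp add: h_def w_def case_prod_beta)
  qed (simp add: h_def w_def)
  have sums: "(\<lambda>n. h n z) sums s z" for z
    using sums_mult[OF summable_sums[OF sums_summable[OF series_term_sums[of f p x y "fst z" "snd z"]]],
        of "indicator D z"]
    by (simp add: h_def s_def case_prod_beta)
  note dominated = sums_integral_dominated[OF h_meas w_int bound sums]
  show "set_integrable (lborel \<Otimes>\<^sub>M lborel) D (\<lambda>(r, \<phi>). series_term f p x y n r \<phi>)"
    using dominated(1) unfolding set_integrable_def h_def .
  show "set_integrable (lborel \<Otimes>\<^sub>M lborel) D (\<lambda>(r, \<phi>). \<Sum>n. series_term f p x y n r \<phi>)"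
    using dominated(2) unfolding set_integrable_def s_def .
  show "(\<lambda>n. set_lebesgue_integral (lborel \<Otimes>\<^sub>M lborel) D (\<lambda>(r, \<phi>). series_term f p x y n r \<phi>))
      sums set_lebesgue_integral (lborel \<Otimes>\<^sub>M lborel) D (\<lambda>(r, \<phi>). \<Sum>n. series_term f p x y n r \<phi>)"
    using dominated(3) unfolding set_lebesgue_integral_def h_def s_def .
qed

lemma iter_int_eq_set_integral:
  assumes "set_integrable (lborel \<Otimes>\<^sub>M lborel) ({0..} \<times> {0..2*pi}) (\<lambda>(r, \<phi>). g r \<phi>)"
  shows "iter_int g = set_lebesgue_integral (lborel \<Otimes>\<^sub>M lborel) ({0..} \<times> {0..2*pi}) (\<lambda>(r, \<phi>). g r \<phi>)"
proof -
  have "iter_int g = (\<integral>r. (\<integral>\<phi>. indicator ({0..} \<times> {0..2*pi}) (r, \<phi>) * g r \<phi> \<partial>lborel) \<partial>lborel)"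
    unfolding iter_int_def set_lebesgue_integral_def by (simp add: indicator_times mult.assoc)
  also have "\<dots> = set_lebesgue_integral (lborel \<Otimes>\<^sub>M lborel) ({0..} \<times> {0..2*pi}) (\<lambda>(r, \<phi>). g r \<phi>)"
    using lborel_pair.integral_fst'[OF assms[unfolded set_integrable_def]]
    unfolding set_lebesgue_integral_def by (simp add: case_prod_beta)
  finally show ?thesis .
qed

theorem lemma5:
  fixes f :: "real \<Rightarrow> real" and a p x y :: real
  assumes "cond1 f" and "cond2a f" and "a > 0" and "p > 0"
  shows "(\<forall>n. set_integrable (lborel \<Otimes>\<^sub>M lborel) ({0..} \<times> {0..2*pi})
              (\<lambda>(r, \<phi>). series_term f p x y n r \<phi>))
    \<and> (\<forall>r\<ge>0. \<forall>\<phi>\<in>{0..2*pi}. summable (\<lambda>n. series_term f p x y n r \<phi>))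
    \<and> set_integrable (lborel \<Otimes>\<^sub>M lborel) ({0..} \<times> {0..2*pi})
              (\<lambda>(r, \<phi>). \<Sum>n. series_term f p x y n r \<phi>)
    \<and> (\<lambda>n. a * exp (- p * (x\<^sup>2 + y\<^sup>2)) * iter_int (series_term f p x y n))
        sums (a * exp (- p * (x\<^sup>2 + y\<^sup>2)) * iter_int (\<lambda>r \<phi>. \<Sum>n. series_term f p x y n r \<phi>))"
proof -
  \<comment> \<open>Only the bound 0 <= f <= F and measurability from (1) are used.\<close>
  note termwise = series_term_integrate_termwise[OF \<open>cond1 f\<close> \<open>p > 0\<close>, of x y]
  have "(\<lambda>n. iter_int (series_term f p x y n)) sums iter_int (\<lambda>r \<phi>. \<Sum>n. series_term f p x y n r \<phi>)"
    using termwise(3) by (simp add: iter_int_eq_set_integral termwise(1,2))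
  then show ?thesis
    using termwise(1,2) sums_summable[OF series_term_sums] sums_mult[of _ _ "a * exp (- p * (x\<^sup>2 + y\<^sup>2))"]
    by simp
qed

end
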